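(* For all integers $n$ and $\alpha$ with $n\le\alpha\le 2^n$, there exists a minimal $n$-state nondeterministic finite automaton accepting a star language whose equivalent minimal deterministic finite automaton has exactly $\alpha$ states. The same statement holds with "star language" replaced by "comet language", and also with "star language" replaced by "two-sided comet language".
   Context: NFAs have a single initial state and a transition function $\delta:Q\times\Sigma\to 2^Q$ that may map to the empty set (no sink state is needed or counted); DFAs are complete, so a sink state is counted. A minimal $n$-state NFA is an NFA with $n$ states such that no NFA with fewer states accepts the same language. A language $L\subseteq\Sigma^*$ is a star language if $L=H^*$ for some regular language $H\subseteq\Sigma^*$. It is a comet language if $L=G^*H$ for regular languages $G,H\subseteq\Sigma^*$ with $G\neq\{\lambda\}$ and $G\neq\emptyset$ ($\lambda$ the empty word). It is a two-sided comet language if $L=EG^*H$ for regular languages $E,G,H\subseteq\Sigma^*$ with $G\neq\{\lambda\}$ and $G\neq\emptyset$. *)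

theory Defs
  imports Main
begin

definition conc :: "'a list set \<Rightarrow> 'a list set \<Rightarrow> 'a list set" where
  "conc A B = {u @ v | u v. u \<in> A \<and> v \<in> B}"

inductive_set kstar :: "'a list set \<Rightarrow> 'a list set" for A :: "'a list set" where
  kstar_Nil: "[] \<in> kstar A"
| kstar_app: "u \<in> A \<Longrightarrow> v \<in> kstar A \<Longrightarrow> u @ v \<in> kstar A"

record 'a nfa =
  nstates :: "nat set"
  ninit   :: nat
  ntrans  :: "nat \<Rightarrow> 'a \<Rightarrow> nat set"
  nfinal  :: "nat set"

definition is_nfa :: "'a set \<Rightarrow> 'a nfa \<Rightarrow> bool" where
  "is_nfa Alph A \<longleftrightarrow> finite (nstates A) \<and> ninit A \<in> nstates A \<and>
     nfinal A \<subseteq> nstates A \<and>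
     (\<forall>q\<in>nstates A. \<forall>a\<in>Alph. ntrans A q a \<subseteq> nstates A)"

fun nrun :: "'a nfa \<Rightarrow> nat set \<Rightarrow> 'a list \<Rightarrow> nat set" where
  "nrun A S [] = S"
| "nrun A S (a # w) = nrun A (\<Union>q\<in>S. ntrans A q a) w"

definition nfa_lang :: "'a set \<Rightarrow> 'a nfa \<Rightarrow> 'a list set" where
  "nfa_lang Alph A = {w \<in> lists Alph. nrun A {ninit A} w \<inter> nfinal A \<noteq> {}}"

record 'a dfa =
  dstates :: "nat set"
  dinit   :: nat
  dtrans  :: "nat \<Rightarrow> 'a \<Rightarrow> nat"
  dfinal  :: "nat set"

definition is_dfa :: "'a set \<Rightarrow> 'a dfa \<Rightarrow> bool" where
  "is_dfa Alph D \<longleftrightarrow> finite (dstates D) \<and> dinit D \<in> dstates D \<and>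
     dfinal D \<subseteq> dstates D \<and>
     (\<forall>q\<in>dstates D. \<forall>a\<in>Alph. dtrans D q a \<in> dstates D)"

definition dfa_lang :: "'a set \<Rightarrow> 'a dfa \<Rightarrow> 'a list set" where
  "dfa_lang Alph D = {w \<in> lists Alph. fold (\<lambda>a q. dtrans D q a) w (dinit D) \<in> dfinal D}"

definition regular :: "'a set \<Rightarrow> 'a list set \<Rightarrow> bool" where
  "regular Alph L \<longleftrightarrow> (\<exists>A. is_nfa Alph A \<and> nfa_lang Alph A = L)"

definition minimal_nfa :: "'a set \<Rightarrow> 'a nfa \<Rightarrow> nat \<Rightarrow> bool" where
  "minimal_nfa Alph A n \<longleftrightarrow> is_nfa Alph A \<and> card (nstates A) = n \<and>
     (\<forall>B. is_nfa Alph B \<and> nfa_lang Alph B = nfa_lang Alph A \<longrightarrow> n \<le> card (nstates B))"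

definition min_dfa_size :: "'a set \<Rightarrow> 'a list set \<Rightarrow> nat \<Rightarrow> bool" where
  "min_dfa_size Alph L m \<longleftrightarrow>
     (\<exists>D. is_dfa Alph D \<and> dfa_lang Alph D = L \<and> card (dstates D) = m) \<and>
     (\<forall>D. is_dfa Alph D \<and> dfa_lang Alph D = L \<longrightarrow> m \<le> card (dstates D))"

definition star_lang :: "'a set \<Rightarrow> 'a list set \<Rightarrow> bool" where
  "star_lang Alph L \<longleftrightarrow> (\<exists>H. H \<subseteq> lists Alph \<and> regular Alph H \<and> L = kstar H)"

definition comet_lang :: "'a set \<Rightarrow> 'a list set \<Rightarrow> bool" where
  "comet_lang Alph L \<longleftrightarrow> (\<exists>G H. G \<subseteq> lists Alph \<and> H \<subseteq> lists Alph \<and>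
     regular Alph G \<and> regular Alph H \<and> G \<noteq> {[]} \<and> G \<noteq> {} \<and> L = conc (kstar G) H)"

definition two_sided_comet_lang :: "'a set \<Rightarrow> 'a list set \<Rightarrow> bool" where
  "two_sided_comet_lang Alph L \<longleftrightarrow> (\<exists>E G H. E \<subseteq> lists Alph \<and> G \<subseteq> lists Alph \<and>
     H \<subseteq> lists Alph \<and> regular Alph E \<and> regular Alph G \<and> regular Alph H \<and>
     G \<noteq> {[]} \<and> G \<noteq> {} \<and> L = conc E (conc (kstar G) H))"

end

theory Submission
  imports Defs
begin

text \<open>
  If the initial state of an NFA is its only final state, the accepted words are those returning
  to the initial state; they are closed under concatenation, so the language \<open>L\<close> equals \<open>L\<^sup>*\<close>,
  \<open>L\<^sup>*{\<lambda>}\<close> and \<open>{\<lambda>}L\<^sup>*{\<lambda>}\<close>. Suppose moreover that for every state \<open>q\<close> some word \<open>x\<^sub>q\<close> leads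
  from the initial state exactly to \<open>{q}\<close> and some word \<open>y\<^sub>q\<close> leads back to the initial state
  from \<open>q\<close> and from no other state. Then the pairs \<open>(x\<^sub>q, y\<^sub>q)\<close> form a fooling set, so the NFA
  is minimal, and the \<open>y\<^sub>q\<close> distinguish any two reachable subsets, so the minimal DFA has
  exactly as many states as there are reachable subsets.

  For \<open>\<alpha> = n\<close> a unary \<open>n\<close>-cycle has \<open>n\<close> reachable subsets. For \<open>n < \<alpha> \<le> 2\<^sup>n\<close> choose \<open>\<alpha>\<close>
  subsets of the states, among them \<open>\<emptyset>\<close> and all singletons; one letter per chosen subset sends
  the initial state to it, and letters \<open>q \<mapsto> 0\<close> supply the words \<open>y\<^sub>q\<close>. Then the reachable
  subsets are exactly the chosen ones.
\<close>

lemma nrun_append: "nrun A S (u @ v) = nrun A (nrun A S u) v"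
  by (induction u arbitrary: S) auto

lemma nrun_UN: "nrun A S w = (\<Union>q\<in>S. nrun A {q} w)"
proof (induction w arbitrary: S)
  case (Cons a w)
  have "nrun A S (a # w) = (\<Union>r\<in>(\<Union>q\<in>S. ntrans A q a). nrun A {r} w)"
    using Cons.IH[of "\<Union>q\<in>S. ntrans A q a"] by simp
  also have "\<dots> = (\<Union>q\<in>S. \<Union>r\<in>ntrans A q a. nrun A {r} w)" by blast
  also have "\<dots> = (\<Union>q\<in>S. nrun A {q} (a # w))"
    by (simp add: Cons.IH[symmetric])
  finally show ?case .
qed simp

lemma nrun_mono: "S \<subseteq> T \<Longrightarrow> nrun A S w \<subseteq> nrun A T w"
  by (subst (1 2) nrun_UN) blast

lemma nrun_empty: "nrun A {} w = {}"
  by (subst nrun_UN) simp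

lemma nrun_subset_nstates:
  assumes "is_nfa Alph A" "S \<subseteq> nstates A" "w \<in> lists Alph"
  shows "nrun A S w \<subseteq> nstates A"
  using assms(2,3)
proof (induction w arbitrary: S)
  case (Cons a w)
  have "ntrans A q a \<subseteq> nstates A" if "q \<in> S" for q
  proof -
    have "q \<in> nstates A" "a \<in> Alph" using Cons.prems that by auto
    then show ?thesis using assms(1) by (simp add: is_nfa_def)
  qed
  then have "(\<Union>q\<in>S. ntrans A q a) \<subseteq> nstates A" by blast
  with Cons show ?case by simp
qed simp

lemma fold_dtrans_in_dstates:
  "is_dfa Alph D \<Longrightarrow> s \<in> dstates D \<Longrightarrow> w \<in> lists Alph \<Longrightarrow>
    fold (\<lambda>a q. dtrans D q a) w s \<in> dstates D"
  by (induction w arbitrary: s) (auto simp: is_dfa_def)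

lemma init_in_nrun_iff:
  assumes "S \<subseteq> nstates A" "q \<in> nstates A"
    and "\<forall>p\<in>nstates A. ninit A \<in> nrun A {p} v \<longleftrightarrow> p = q"
  shows "ninit A \<in> nrun A S v \<longleftrightarrow> q \<in> S"
  using assms by (subst nrun_UN) fastforce

section \<open>Lower bounds on the number of states\<close>

lemma fooling_set_card_le_nstates:
  assumes B: "is_nfa Alph B"
    and words: "\<And>i. i \<in> I \<Longrightarrow> x i \<in> lists Alph \<and> y i \<in> lists Alph"
    and fooling: "\<And>i j. i \<in> I \<Longrightarrow> j \<in> I \<Longrightarrow> x i @ y j \<in> nfa_lang Alph B \<longleftrightarrow> i = j"
  shows "card I \<le> card (nstates B)"
proof -
  let ?acc = "\<lambda>i s. s \<in> nrun B {ninit B} (x i) \<and> nrun B {s} (y i) \<inter> nfinal B \<noteq> {}"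
  have "\<exists>s. ?acc i s" if "i \<in> I" for i
  proof -
    have "nrun B (nrun B {ninit B} (x i)) (y i) \<inter> nfinal B \<noteq> {}"
      using fooling[OF that that] by (simp add: nfa_lang_def nrun_append)
    then show ?thesis by (subst (asm) nrun_UN) blast
  qed
  then obtain s where s: "\<And>i. i \<in> I \<Longrightarrow> ?acc i (s i)" by metis
  have "inj_on s I"
  proof (rule inj_onI)
    fix i j assume ij: "i \<in> I" "j \<in> I" "s i = s j"
    have "nrun B {s j} (y j) \<subseteq> nrun B (nrun B {ninit B} (x i)) (y j)"
      using s[of i] ij by (intro nrun_mono) auto
    then have "x i @ y j \<in> nfa_lang Alph B"
      using s[of j] words ij by (auto simp: nfa_lang_def nrun_append)
    then show "i = j" using fooling ij by blast
  qed
  moreover have "s ` I \<subseteq> nstates B"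
  proof
    fix t assume "t \<in> s ` I"
    then obtain i where i: "i \<in> I" "t = s i" by blast
    have "nrun B {ninit B} (x i) \<subseteq> nstates B"
      using B words[OF i(1)] by (intro nrun_subset_nstates[of Alph]) (auto simp: is_nfa_def)
    then show "t \<in> nstates B" using s[OF i(1)] i(2) by blast
  qed
  moreover have "finite (nstates B)" using B by (simp add: is_nfa_def)
  ultimately show ?thesis by (rule card_inj_on_le)
qed

lemma distinguishable_card_le_dstates:
  assumes D: "is_dfa Alph D"
    and words: "\<And>i. i \<in> I \<Longrightarrow> w i \<in> lists Alph"
    and distinct: "\<And>i j. i \<in> I \<Longrightarrow> j \<in> I \<Longrightarrow> i \<noteq> j \<Longrightarrow>
      \<exists>v\<in>lists Alph. (w i @ v \<in> dfa_lang Alph D) \<noteq> (w j @ v \<in> dfa_lang Alph D)"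
  shows "card I \<le> card (dstates D)"
proof -
  define f where "f i = fold (\<lambda>a q. dtrans D q a) (w i) (dinit D)" for i
  have "inj_on f I"
  proof (rule inj_onI, rule ccontr)
    fix i j assume ij: "i \<in> I" "j \<in> I" "f i = f j" "i \<noteq> j"
    then obtain v where v: "v \<in> lists Alph"
      "(w i @ v \<in> dfa_lang Alph D) \<noteq> (w j @ v \<in> dfa_lang Alph D)"
      using distinct by blast
    have "fold (\<lambda>a q. dtrans D q a) (w k @ v) (dinit D) = fold (\<lambda>a q. dtrans D q a) v (f k)" for k
      by (simp add: f_def)
    then show False using v ij words by (simp add: dfa_lang_def)
  qed
  moreover have "f ` I \<subseteq> dstates D"
    using fold_dtrans_in_dstates[OF D] words D by (auto simp: f_def is_dfa_def)
  moreover have "finite (dstates D)" using D by (simp add: is_dfa_def)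
  ultimately show ?thesis by (rule card_inj_on_le)
qed

section \<open>The subset construction\<close>

definition reachable_sets :: "'a set \<Rightarrow> 'a nfa \<Rightarrow> nat set set" where
  "reachable_sets Alph A = (\<lambda>w. nrun A {ninit A} w) ` lists Alph"

lemma reachable_sets_subset_Pow:
  "is_nfa Alph A \<Longrightarrow> reachable_sets Alph A \<subseteq> Pow (nstates A)"
  using nrun_subset_nstates[of Alph A "{ninit A}"] by (auto simp: reachable_sets_def is_nfa_def)

lemma nrun_in_reachable_sets:
  "S \<in> reachable_sets Alph A \<Longrightarrow> w \<in> lists Alph \<Longrightarrow> nrun A S w \<in> reachable_sets Alph A"
  unfolding reachable_sets_def by (auto simp flip: nrun_append intro!: imageI)

lemma subset_construction:
  assumes A: "is_nfa Alph A"
  shows "\<exists>D. is_dfa Alph D \<and> dfa_lang Alph D = nfa_lang Alph A \<and>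
    card (dstates D) = card (reachable_sets Alph A)"
proof -
  let ?R = "reachable_sets Alph A"
  have "finite ?R"
    using reachable_sets_subset_Pow[OF A] A by (auto simp: is_nfa_def intro: finite_subset)
  then obtain h where h: "bij_betw h ?R {0..<card ?R}"
    using ex_bij_betw_finite_nat by blast
  define g where "g = inv_into ?R h"
  have h_in: "h S \<in> {0..<card ?R}" and g_h: "g (h S) = S" if "S \<in> ?R" for S
    using that h by (auto simp: g_def bij_betw_def inv_into_f_f)
  have g_in: "g i \<in> ?R" if "i \<in> {0..<card ?R}" for i
    using that bij_betw_apply[OF bij_betw_inv_into[OF h]] by (simp add: g_def)
  have init: "{ninit A} \<in> ?R"
    unfolding reachable_sets_def by (rule image_eqI[of _ _ "[]"]) auto
  define D where "D = \<lparr>dstates = {0..<card ?R}, dinit = h {ninit A},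
    dtrans = \<lambda>i a. h (nrun A (g i) [a]), dfinal = {i \<in> {0..<card ?R}. g i \<inter> nfinal A \<noteq> {}}\<rparr>"
  have run: "fold (\<lambda>a q. dtrans D q a) w (h S) = h (nrun A S w)"
    if "S \<in> ?R" "w \<in> lists Alph" for S w
    using that
  proof (induction w arbitrary: S)
    case (Cons a w)
    then show ?case
      using nrun_in_reachable_sets[of S Alph A "[a]"] by (simp add: D_def g_h)
  qed simp
  have "h (nrun A (g i) [a]) \<in> {0..<card ?R}" if "i \<in> {0..<card ?R}" "a \<in> Alph" for i a
    using that by (intro h_in nrun_in_reachable_sets g_in) auto
  then have "is_dfa Alph D"
    using h_in[OF init] unfolding is_dfa_def D_def by (auto simp del: nrun.simps)
  moreover have "dfa_lang Alph D = nfa_lang Alph A"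
  proof -
    have "fold (\<lambda>a q. dtrans D q a) w (dinit D) \<in> dfinal D \<longleftrightarrow> nrun A {ninit A} w \<inter> nfinal A \<noteq> {}"
      if "w \<in> lists Alph" for w
      using run[OF init that] nrun_in_reachable_sets[OF init that] h_in g_h
      by (simp add: D_def del: nrun.simps)
    then show ?thesis by (auto simp: dfa_lang_def nfa_lang_def)
  qed
  moreover have "card (dstates D) = card ?R" by (simp add: D_def)
  ultimately show ?thesis by blast
qed

lemma min_dfa_size_reachable_sets:
  assumes A: "is_nfa Alph A" and final: "nfinal A = {ninit A}"
    and y: "\<And>q. q \<in> nstates A \<Longrightarrow> y q \<in> lists Alph \<and>
      (\<forall>p\<in>nstates A. ninit A \<in> nrun A {p} (y q) \<longleftrightarrow> p = q)"
  shows "min_dfa_size Alph (nfa_lang Alph A) (card (reachable_sets Alph A))"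
  unfolding min_dfa_size_def
proof (intro conjI allI impI)
  show "\<exists>D. is_dfa Alph D \<and> dfa_lang Alph D = nfa_lang Alph A \<and>
      card (dstates D) = card (reachable_sets Alph A)"
    using subset_construction[OF A] .
next
  fix D assume D: "is_dfa Alph D \<and> dfa_lang Alph D = nfa_lang Alph A"
  let ?R = "reachable_sets Alph A"
  define w where "w S = (SOME u. u \<in> lists Alph \<and> nrun A {ninit A} u = S)" for S
  have w: "w S \<in> lists Alph \<and> nrun A {ninit A} (w S) = S" if "S \<in> ?R" for S
    using that unfolding w_def reachable_sets_def by (rule imageE) (rule someI, auto)
  have accepts: "w S @ y q \<in> nfa_lang Alph A \<longleftrightarrow> q \<in> S" if "S \<in> ?R" "q \<in> nstates A" for S q
  proof -
    have "S \<subseteq> nstates A" using reachable_sets_subset_Pow[OF A] that(1) by blast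
    then have "ninit A \<in> nrun A S (y q) \<longleftrightarrow> q \<in> S"
      using init_in_nrun_iff that(2) y[OF that(2)] by blast
    then show ?thesis using w[OF that(1)] y[OF that(2)] by (simp add: nfa_lang_def nrun_append final)
  qed
  have "card ?R \<le> card (dstates D)"
  proof (rule distinguishable_card_le_dstates[of Alph D ?R w])
    fix S T assume ST: "S \<in> ?R" "T \<in> ?R" "S \<noteq> T"
    then obtain q where "q \<in> nstates A" "q \<in> S \<longleftrightarrow> q \<notin> T"
      using reachable_sets_subset_Pow[OF A] by blast
    then have "(w S @ y q \<in> nfa_lang Alph A) \<noteq> (w T @ y q \<in> nfa_lang Alph A)"
      using accepts ST by blast
    then show "\<exists>v\<in>lists Alph. (w S @ v \<in> dfa_lang Alph D) \<noteq> (w T @ v \<in> dfa_lang Alph D)"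
      using y[OF \<open>q \<in> nstates A\<close>] D by auto
  qed (use D w in auto)
  then show "card ?R \<le> card (dstates D)" .
qed

lemma kstar_eq_if_concat_closed:
  assumes "[] \<in> L" "\<And>u v. u \<in> L \<Longrightarrow> v \<in> L \<Longrightarrow> u @ v \<in> L"
  shows "kstar L = L"
proof
  show "kstar L \<subseteq> L"
  proof
    fix w assume "w \<in> kstar L"
    then show "w \<in> L"
      by (induction rule: kstar.induct) (simp_all add: assms)
  qed
  show "L \<subseteq> kstar L"
  proof
    fix w assume "w \<in> L"
    then have "w @ [] \<in> kstar L" by (intro kstar_app kstar_Nil)
    then show "w \<in> kstar L" by simp
  qed
qed

lemma kstar_nfa_lang_loop:
  assumes "nfinal A = {ninit A}"
  shows "kstar (nfa_lang Alph A) = nfa_lang Alph A"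
proof (rule kstar_eq_if_concat_closed)
  fix u v assume "u \<in> nfa_lang Alph A" "v \<in> nfa_lang Alph A"
  then have "ninit A \<in> nrun A {ninit A} u" "ninit A \<in> nrun A {ninit A} v" "u @ v \<in> lists Alph"
    using assms by (auto simp: nfa_lang_def)
  then show "u @ v \<in> nfa_lang Alph A"
    using nrun_mono[of "{ninit A}" "nrun A {ninit A} u" A v] assms
    by (auto simp: nfa_lang_def nrun_append)
qed (use assms in \<open>simp add: nfa_lang_def\<close>)

lemma conc_Nil_left: "conc {[]} X = X"
  and conc_Nil_right: "conc X {[]} = X"
  unfolding conc_def by auto

lemma regular_Nil: "regular Alph {[]}"
proof -
  let ?A = "\<lparr>nstates = {0}, ninit = 0, ntrans = \<lambda>q a. {}, nfinal = {0}\<rparr> :: 'a nfa"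
  have "nrun ?A {0} w \<inter> nfinal ?A \<noteq> {} \<longleftrightarrow> w = []" for w
    by (cases w) (auto simp: nrun_empty)
  then have "nfa_lang Alph ?A = {[]}"
    unfolding nfa_lang_def by auto
  moreover have "is_nfa Alph ?A" by (simp add: is_nfa_def)
  ultimately show ?thesis unfolding regular_def by blast
qed

lemma star_comet_langs_if_kstar_eq:
  assumes "regular Alph L" "L \<subseteq> lists Alph" "kstar L = L" "L \<noteq> {[]}"
  shows "star_lang Alph L \<and> comet_lang Alph L \<and> two_sided_comet_lang Alph L"
proof (intro conjI)
  have "L \<noteq> {}" using kstar_Nil assms(3) by blast
  have Nil: "{[]} \<subseteq> lists Alph" "regular Alph {[]}" using regular_Nil by auto
  show "star_lang Alph L"
    unfolding star_lang_def using assms by (intro exI[of _ L]) simp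
  show "comet_lang Alph L"
    unfolding comet_lang_def using assms Nil \<open>L \<noteq> {}\<close>
    by (intro exI[of _ L] exI[of _ "{[]}"]) (simp add: conc_Nil_right)
  show "two_sided_comet_lang Alph L"
    unfolding two_sided_comet_lang_def using assms Nil \<open>L \<noteq> {}\<close>
    by (intro exI[of _ "{[]}"] exI[of _ L] exI[of _ "{[]}"]) (simp add: conc_Nil_left conc_Nil_right)
qed

section \<open>Witness automata\<close>

definition star_comet_realizable :: "nat \<Rightarrow> nat \<Rightarrow> bool" where
  "star_comet_realizable n \<alpha> \<longleftrightarrow> (\<exists>(Alph :: nat set) A. finite Alph \<and> minimal_nfa Alph A n \<and>
     star_lang Alph (nfa_lang Alph A) \<and> comet_lang Alph (nfa_lang Alph A) \<and>
     two_sided_comet_lang Alph (nfa_lang Alph A) \<and> min_dfa_size Alph (nfa_lang Alph A) \<alpha>)"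

lemma star_comet_realizable_by_nfa:
  fixes Alph :: "nat set" and A :: "nat nfa"
  assumes fin: "finite Alph" and A: "is_nfa Alph A" and final: "nfinal A = {ninit A}"
    and xy: "\<And>q. q \<in> nstates A \<Longrightarrow> x q \<in> lists Alph \<and> y q \<in> lists Alph \<and>
      nrun A {ninit A} (x q) = {q} \<and> (\<forall>p\<in>nstates A. ninit A \<in> nrun A {p} (y q) \<longleftrightarrow> p = q)"
    and loop: "w \<in> lists Alph" "w \<noteq> []" "ninit A \<in> nrun A {ninit A} w"
  shows "star_comet_realizable (card (nstates A)) (card (reachable_sets Alph A))"
proof -
  let ?L = "nfa_lang Alph A"
  have "w \<in> ?L" using loop final by (simp add: nfa_lang_def)
  have "x p @ y q \<in> ?L \<longleftrightarrow> p = q" if "p \<in> nstates A" "q \<in> nstates A" for p q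
    using xy[OF that(1)] xy[OF that(2)] that by (auto simp: nfa_lang_def nrun_append final)
  then have "minimal_nfa Alph A (card (nstates A))"
    using fooling_set_card_le_nstates[of Alph _ "nstates A" x y] xy A
    unfolding minimal_nfa_def by metis
  moreover have "star_lang Alph ?L \<and> comet_lang Alph ?L \<and> two_sided_comet_lang Alph ?L"
    using star_comet_langs_if_kstar_eq[OF _ _ kstar_nfa_lang_loop[OF final]] A \<open>w \<in> ?L\<close> loop(2)
    by (auto simp: regular_def nfa_lang_def)
  moreover have "min_dfa_size Alph ?L (card (reachable_sets Alph A))"
    using min_dfa_size_reachable_sets[OF A final] xy by blast
  ultimately show ?thesis
    unfolding star_comet_realizable_def using fin by blast
qed

definition cycle_nfa :: "nat \<Rightarrow> nat nfa" where
  "cycle_nfa n = \<lparr>nstates = {..<n}, ninit = 0, ntrans = \<lambda>q a. {Suc q mod n}, nfinal = {0}\<rparr>"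

lemma cycle_nfa_simps [simp]:
  "nstates (cycle_nfa n) = {..<n}" "ninit (cycle_nfa n) = 0" "nfinal (cycle_nfa n) = {0}"
  by (simp_all add: cycle_nfa_def)

lemma nrun_cycle_nfa: "p < n \<Longrightarrow> nrun (cycle_nfa n) {p} w = {(p + length w) mod n}"
proof (induction w arbitrary: p)
  case (Cons a w)
  then show ?case by (simp add: cycle_nfa_def mod_add_left_eq)
qed simp

lemma reachable_sets_cycle_nfa:
  assumes "0 < n"
  shows "reachable_sets {0} (cycle_nfa n) = (\<lambda>q. {q}) ` {..<n}"
proof
  show "reachable_sets {0} (cycle_nfa n) \<subseteq> (\<lambda>q. {q}) ` {..<n}"
    using assms by (auto simp: reachable_sets_def nrun_cycle_nfa)
  show "(\<lambda>q. {q}) ` {..<n} \<subseteq> reachable_sets {0} (cycle_nfa n)"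
  proof
    fix T assume "T \<in> (\<lambda>q. {q}) ` {..<n}"
    then obtain q where "q < n" "T = {q}" by blast
    then have "T = nrun (cycle_nfa n) {0} (replicate q 0)" using assms by (simp add: nrun_cycle_nfa)
    then show "T \<in> reachable_sets {0} (cycle_nfa n)"
      by (auto simp: reachable_sets_def intro!: image_eqI[of _ _ "replicate q 0"])
  qed
qed

lemma dvd_add_diff_iff_eq:
  fixes p q n :: nat
  assumes "p < n" "q < n"
  shows "n dvd p + n - q \<longleftrightarrow> p = q"
proof (cases "q \<le> p")
  case True
  then have "p + n - q = (p - q) + n" by simp
  then have "n dvd p + n - q \<longleftrightarrow> n dvd p - q" by (simp only: dvd_add_triv_right_iff)
  also have "\<dots> \<longleftrightarrow> p = q" using assms True by (auto dest: dvd_imp_le)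
  finally show ?thesis .
next
  case False
  then have "0 < p + n - q" "p + n - q < n" using assms by auto
  then show ?thesis using False by (auto dest: dvd_imp_le)
qed

lemma star_comet_realizable_cycle:
  assumes "0 < n"
  shows "star_comet_realizable n n"
proof -
  have "star_comet_realizable (card (nstates (cycle_nfa n))) (card (reachable_sets {0} (cycle_nfa n)))"
  proof (rule star_comet_realizable_by_nfa[where x = "\<lambda>q. replicate q 0" and y = "\<lambda>q. replicate (n - q) 0"
        and w = "replicate n 0"])
    show "is_nfa {0} (cycle_nfa n)" using assms by (auto simp: is_nfa_def cycle_nfa_def)
  qed (use assms in \<open>auto simp: nrun_cycle_nfa dvd_add_diff_iff_eq\<close>)
  then show ?thesis using assms by (simp add: reachable_sets_cycle_nfa card_image inj_on_def)
qed

definition subsets_nfa :: "nat \<Rightarrow> nat \<Rightarrow> (nat \<Rightarrow> nat set) \<Rightarrow> nat nfa" where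
  "subsets_nfa n \<alpha> subs = \<lparr>nstates = {..<n}, ninit = 0,
     ntrans = \<lambda>p a. if a < \<alpha> then (if p = 0 then subs a else {}) else (if p + \<alpha> = a then {0} else {}),
     nfinal = {0}\<rparr>"

lemma subsets_nfa_simps [simp]:
  "nstates (subsets_nfa n \<alpha> subs) = {..<n}" "ninit (subsets_nfa n \<alpha> subs) = 0"
  "nfinal (subsets_nfa n \<alpha> subs) = {0}"
  by (simp_all add: subsets_nfa_def)

lemma nrun_subsets_nfa_letter:
  "nrun (subsets_nfa n \<alpha> subs) S [a] =
    (if a < \<alpha> then (if 0 \<in> S then subs a else {}) else (if a - \<alpha> \<in> S then {0} else {}))"
  by (auto simp: subsets_nfa_def)

lemma reachable_sets_subsets_nfa:
  assumes Nil: "{} \<in> subs ` {..<\<alpha>}" and zero: "{0} \<in> subs ` {..<\<alpha>}"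
  shows "reachable_sets Alph (subsets_nfa n \<alpha> subs) \<subseteq> subs ` {..<\<alpha>}"
proof -
  let ?A = "subsets_nfa n \<alpha> subs"
  have "nrun ?A S w \<in> subs ` {..<\<alpha>}" if "S \<in> subs ` {..<\<alpha>}" for S w
    using that
  proof (induction w arbitrary: S)
    case (Cons a w)
    have "nrun ?A S (a # w) = nrun ?A (nrun ?A S [a]) w"
      using nrun_append[of ?A S "[a]" w] by simp
    also have "\<dots> \<in> subs ` {..<\<alpha>}"
      using Nil zero by (intro Cons.IH) (auto simp: nrun_subsets_nfa_letter simp del: nrun.simps)
    finally show ?case .
  qed simp
  then show ?thesis using zero by (auto simp: reachable_sets_def)
qed

lemma star_comet_realizable_subsets:
  assumes subs: "inj_on subs {..<\<alpha>}" "subs ` {..<\<alpha>} \<subseteq> Pow {..<n}"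
    and Nil: "{} \<in> subs ` {..<\<alpha>}" and singletons: "\<And>q. q < n \<Longrightarrow> {q} \<in> subs ` {..<\<alpha>}"
    and "0 < n"
  shows "star_comet_realizable n \<alpha>"
proof -
  let ?A = "subsets_nfa n \<alpha> subs" and ?Alph = "{..<\<alpha> + n}"
  have one_letter: "nrun ?A {0} [a] = subs a" if "a < \<alpha>" for a
    using that by (simp add: nrun_subsets_nfa_letter del: nrun.simps)
  have "subs ` {..<\<alpha>} \<subseteq> reachable_sets ?Alph ?A"
  proof
    fix T assume "T \<in> subs ` {..<\<alpha>}"
    then obtain a where "a < \<alpha>" "T = nrun ?A {0} [a]" using one_letter by auto
    then show "T \<in> reachable_sets ?Alph ?A"
      by (auto simp: reachable_sets_def simp del: nrun.simps intro!: image_eqI[of _ _ "[a]"])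
  qed
  then have reach: "reachable_sets ?Alph ?A = subs ` {..<\<alpha>}"
    using reachable_sets_subsets_nfa[OF Nil singletons[OF \<open>0 < n\<close>], of ?Alph n] by blast
  have "\<forall>q. \<exists>a. q < n \<longrightarrow> a < \<alpha> \<and> subs a = {q}"
    using singletons by (fastforce simp: image_iff)
  then obtain idx where idx: "\<And>q. q < n \<Longrightarrow> idx q < \<alpha> \<and> subs (idx q) = {q}"
    by (metis choice)
  have "star_comet_realizable (card (nstates ?A)) (card (reachable_sets ?Alph ?A))"
  proof (rule star_comet_realizable_by_nfa[where x = "\<lambda>q. [idx q]" and y = "\<lambda>q. [\<alpha> + q]"
        and w = "[idx 0]"])
    show "is_nfa ?Alph ?A"
      using subs(2) \<open>0 < n\<close> by (auto simp: is_nfa_def subsets_nfa_def)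
    show "[idx 0] \<in> lists ?Alph" "[idx 0] \<noteq> []" "ninit ?A \<in> nrun ?A {ninit ?A} [idx 0]"
      using idx[OF \<open>0 < n\<close>] one_letter by auto
    fix q assume "q \<in> nstates ?A"
    then have "q < n" by simp
    then show "[idx q] \<in> lists ?Alph \<and> [\<alpha> + q] \<in> lists ?Alph \<and> nrun ?A {ninit ?A} [idx q] = {q} \<and>
      (\<forall>p\<in>nstates ?A. ninit ?A \<in> nrun ?A {p} [\<alpha> + q] \<longleftrightarrow> p = q)"
      using idx[OF \<open>q < n\<close>] one_letter by (auto simp: nrun_subsets_nfa_letter simp del: nrun.simps)
  qed simp_all
  then show ?thesis by (simp add: reach card_image subs(1))
qed

lemma subset_family_with_singletons:
  assumes "n < \<alpha>" "\<alpha> \<le> 2 ^ n"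
  obtains subs :: "nat \<Rightarrow> nat set" where "inj_on subs {..<\<alpha>}" "subs ` {..<\<alpha>} \<subseteq> Pow {..<n}"
    "{} \<in> subs ` {..<\<alpha>}" "\<And>q. q < n \<Longrightarrow> {q} \<in> subs ` {..<\<alpha>}"
proof -
  define X where "X = insert {} ((\<lambda>q. {q}) ` {..<n})"
  have X: "X \<subseteq> Pow {..<n}" by (auto simp: X_def)
  have "card X = Suc n"
    unfolding X_def by (subst card_insert_disjoint) (auto simp: card_image inj_on_def)
  then have "\<alpha> - Suc n \<le> card (Pow {..<n} - X)"
    using X assms by (simp add: card_Diff_subset card_Pow finite_subset)
  then obtain F where F: "F \<subseteq> Pow {..<n} - X" "card F = \<alpha> - Suc n" "finite F"
    by (rule obtain_subset_with_card_n)
  have "finite (X \<union> F)" "card (X \<union> F) = \<alpha>"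
    using X F assms card_Un_disjoint[of X F] \<open>card X = Suc n\<close> by (auto intro: finite_subset)
  then obtain subs where "bij_betw subs {..<\<alpha>} (X \<union> F)"
    using ex_bij_betw_nat_finite lessThan_atLeast0 by metis
  then have "inj_on subs {..<\<alpha>}" "subs ` {..<\<alpha>} = X \<union> F"
    by (auto simp: bij_betw_def)
  moreover have "X \<union> F \<subseteq> Pow {..<n}" using X F by blast
  moreover have "{} \<in> X" "\<And>q. q < n \<Longrightarrow> {q} \<in> X" by (auto simp: X_def)
  ultimately show thesis by (intro that) blast+
qed

theorem mainTheorem3:
  fixes n \<alpha> :: nat
  assumes "1 \<le> n" and "n \<le> \<alpha>" and "\<alpha> \<le> 2 ^ n"
  shows "(\<exists>(Alph :: nat set) A. finite Alph \<and> minimal_nfa Alph A n \<and>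
            star_lang Alph (nfa_lang Alph A) \<and> min_dfa_size Alph (nfa_lang Alph A) \<alpha>)
       \<and> (\<exists>(Alph :: nat set) A. finite Alph \<and> minimal_nfa Alph A n \<and>
            comet_lang Alph (nfa_lang Alph A) \<and> min_dfa_size Alph (nfa_lang Alph A) \<alpha>)
       \<and> (\<exists>(Alph :: nat set) A. finite Alph \<and> minimal_nfa Alph A n \<and>
            two_sided_comet_lang Alph (nfa_lang Alph A) \<and> min_dfa_size Alph (nfa_lang Alph A) \<alpha>)"
proof -
  have "star_comet_realizable n \<alpha>"
  proof (cases "\<alpha> = n")
    case True
    then show ?thesis using star_comet_realizable_cycle assms(1) by simp
  next
    case False
    then obtain subs where "inj_on subs {..<\<alpha>}" "subs ` {..<\<alpha>} \<subseteq> Pow {..<n}"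
      "{} \<in> subs ` {..<\<alpha>}" "\<And>q. q < n \<Longrightarrow> {q} \<in> subs ` {..<\<alpha>}"
      using subset_family_with_singletons assms by (metis le_neq_implies_less)
    then show ?thesis using star_comet_realizable_subsets assms(1) by simp
  qed
  then show ?thesis unfolding star_comet_realizable_def by blast
qed

end
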